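(* Let $\mathfrak h,\mathfrak n\in\mathrm{Mult}_\rho$, $\mathfrak n\ne\emptyset$, let $a$ be the smallest integer with $\mathfrak n[a]\ne\emptyset$, and suppose $\mathfrak n[a]$ is admissible to $\mathfrak h$. For an enumeration $\Delta_1,\dots,\Delta_k$ of the segments of $\mathfrak n[a]$, set $\mathfrak r_0=\mathfrak h$, $\mathfrak r_i=\mathfrak r(\{\Delta_i,\dots,\Delta_1\},\mathfrak h)$, and consider the multisegment $\{\Upsilon(\Delta_1,\mathfrak r_0),\Upsilon(\Delta_2,\mathfrak r_1),\dots,\Upsilon(\Delta_k,\mathfrak r_{k-1})\}$. This multisegment does not depend on the chosen enumeration of $\mathfrak n[a]$. (It is denoted $\mathfrak{fs}(\mathfrak n,\mathfrak h)$.)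
   Context: Segments: for integers $a\le b$, $[a,b]_\rho$ (think of the integer interval $\{a,\dots,b\}$), with $a(\Delta)=a$, $b(\Delta)=b$, and inclusion of segments as intervals. Two segments are linked if their union is a segment (an interval) and neither contains the other. A multisegment is a finite multiset of nonempty segments; $\mathrm{Mult}_\rho$ is the set of multisegments (including $\emptyset$); $+$ and $-$ denote multiset sum and difference (adding an empty segment does nothing). For $c\in\mathbb Z$, $\mathfrak m[c]$ is the submultisegment of segments $\Delta\in\mathfrak m$ with $a(\Delta)=c$. A sequence of segments $\Delta_1,\dots,\Delta_k$ is ascending if for $i<j$ either $\Delta_i,\Delta_j$ are unlinked or $a(\Delta_i)<a(\Delta_j)$. Write $[x,y]_\rho\prec^L[x',y']_\rho$ if $x<x'$, or $x=x'$ and $y<y'$. A segment $\Delta=[a,b]_\rho$ is admissible to $\mathfrak h$ if $\mathfrak h$ contains a segment $[a,c]_\rho$ with $c\ge b$. Removal process: for $\Delta=[a,b]_\rho$ admissible to $\mathfrak h$, let $\Delta_1=[a_1,b_1]_\rho$ be a shortest segment of $\mathfrak h$ with $a_1=a$ and $b_1\ge b$; recursively, let $\Delta_i=[a_i,b_i]_\rho$ be the $\prec^L$-minimal segment of $\mathfrak h$ with $a_{i-1}<a_i$ and $b\le b_i<b_{i-1}$, stopping when none exists; let $\Delta_1,\dots,\Delta_r$ be the segments obtained (the removal sequence for $(\Delta,\mathfrak h)$). Put $\Delta_i^{tr}=[a_{i+1},b_i]_\rho$ for $i<r$ and $\Delta_r^{tr}=[b+1,b_r]_\rho$ (possibly empty),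 and $\mathfrak r(\Delta,\mathfrak h)=\mathfrak h-\sum_i\Delta_i+\sum_i\Delta_i^{tr}$; also $\Upsilon(\Delta,\mathfrak h)=\Delta_1$. If $\Delta$ is not admissible to $\mathfrak h$, $\mathfrak r(\Delta,\mathfrak h)=\infty$ (a formal symbol), and $\mathfrak r(\Delta,\infty)=\infty$. For $\mathfrak m\in\mathrm{Mult}_\rho$ with segments in ascending order $\Delta_1,\dots,\Delta_k$, $\mathfrak r(\mathfrak m,\mathfrak h)=\mathfrak r(\Delta_k,\dots\mathfrak r(\Delta_1,\mathfrak h)\dots)$ (independent of the ascending order; $\mathfrak r(\emptyset,\mathfrak h)=\mathfrak h$), and $\mathfrak m$ is admissible to $\mathfrak h$ if $\mathfrak r(\mathfrak m,\mathfrak h)\ne\infty$. *)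

theory Defs
  imports Main "HOL-Library.Multiset" "HOL-Library.Product_Lexorder"
begin

text \<open>A segment [a,b]_rho is represented by the pair (a,b) :: int * int (nonempty iff a <= b). The cuspidal rho is fixed and
  plays no role. The product lexicographic order on int * int is exactly the order prec^L.\<close>

type_synonym seg = "int \<times> int"

definition is_mult :: "seg multiset \<Rightarrow> bool" where
  "is_mult m \<longleftrightarrow> (\<forall>s\<in>#m. fst s \<le> snd s)"

definition mpart :: "seg multiset \<Rightarrow> int \<Rightarrow> seg multiset" where
  "mpart m c = filter_mset (\<lambda>s. fst s = c) m"

definition seg_admissible :: "seg \<Rightarrow> seg multiset \<Rightarrow> bool" where
  "seg_admissible d h \<longleftrightarrow> (\<exists>c. (fst d, c) \<in># h \<and> snd d \<le> c)"

definition upsilon :: "seg \<Rightarrow> seg multiset \<Rightarrow> seg" where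
  "upsilon d h = (fst d, Min {c. (fst d, c) \<in># h \<and> snd d \<le> c})"

definition lmin :: "seg set \<Rightarrow> seg" where
  "lmin S = (let x = Min (fst ` S) in (x, Min (snd ` {s\<in>S. fst s = x})))"

definition cands :: "seg multiset \<Rightarrow> int \<Rightarrow> seg \<Rightarrow> seg set" where
  "cands h b s = {t\<in>set_mset h. fst s < fst t \<and> b \<le> snd t \<and> snd t < snd s}"

definition next_seg :: "seg multiset \<Rightarrow> int \<Rightarrow> seg \<Rightarrow> seg option" where
  "next_seg h b s = (if cands h b s = {} then None else Some (lmin (cands h b s)))"

lemma lmin_in: "finite S \<Longrightarrow> S \<noteq> {} \<Longrightarrow> lmin S \<in> S"
proof -
  assume f: "finite S" and ne: "S \<noteq> {}"
  define x where "x = Min (fst ` S)"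
  have "x \<in> fst ` S" using f ne by (simp add: x_def)
  then have ne2: "{s\<in>S. fst s = x} \<noteq> {}" by auto
  have "Min (snd ` {s\<in>S. fst s = x}) \<in> snd ` {s\<in>S. fst s = x}"
    using f ne2 by (intro Min_in) auto
  then show ?thesis unfolding lmin_def Let_def x_def[symmetric] by auto
qed

lemma next_seg_dec:
  assumes "next_seg h b s = Some t" shows "b \<le> snd t \<and> snd t < snd s"
proof -
  have ne: "cands h b s \<noteq> {}" and t: "t = lmin (cands h b s)"
    using assms by (auto simp: next_seg_def split: if_splits)
  have "finite (cands h b s)" unfolding cands_def by auto
  then have "t \<in> cands h b s" using lmin_in ne t by auto
  then show ?thesis unfolding cands_def by auto
qed

function rem_seq :: "seg multiset \<Rightarrow> int \<Rightarrow> seg \<Rightarrow> seg list" where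
  "rem_seq h b s = s # (case next_seg h b s of None \<Rightarrow> [] | Some t \<Rightarrow> rem_seq h b t)"
  by auto
termination
  by (relation "measure (\<lambda>(h, b, s). nat (snd s - b))")
     (auto dest!: next_seg_dec)

fun truncs :: "int \<Rightarrow> seg list \<Rightarrow> seg multiset" where
  "truncs b [] = {#}"
| "truncs b [s] = (if b + 1 \<le> snd s then {#(b + 1, snd s)#} else {#})"
| "truncs b (s # t # rest) = add_mset (fst t, snd s) (truncs b (t # rest))"

text \<open>r(Delta,h); None plays the role of the formal symbol infinity.\<close>
definition rmv :: "seg \<Rightarrow> seg multiset option \<Rightarrow> seg multiset option" where
  "rmv d oh = (case oh of None \<Rightarrow> None | Some h \<Rightarrow>
     (if seg_admissible d h then
        (let sq = rem_seq h (snd d) (upsilon d h) in Some (h - mset sq + truncs (snd d) sq))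
      else None))"

text \<open>r(m,h): apply the segments of m in an ascending order; sorting by prec^L
  (i.e. by start, then end) gives an ascending order.\<close>
definition rmult :: "seg multiset \<Rightarrow> seg multiset \<Rightarrow> seg multiset option" where
  "rmult m h = fold rmv (sorted_list_of_multiset m) (Some h)"

definition admissible :: "seg multiset \<Rightarrow> seg multiset \<Rightarrow> bool" where
  "admissible m h \<longleftrightarrow> rmult m h \<noteq> None"

definition fs_list :: "seg list \<Rightarrow> seg multiset \<Rightarrow> seg multiset" where
  "fs_list xs h = mset (map (\<lambda>i. upsilon (xs ! i) (the (rmult (mset (take i xs)) h)))
                         [0..<length xs])"

end

theory Submission
  imports Defs
begin

text \<open>All segments of \<open>n[a]\<close> start at the same point \<open>a\<close>. Removing such a segment \<open>\<Delta>\<close>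
  from \<open>h\<close> changes the part \<open>h[a]\<close> only by deleting \<open>\<Upsilon>(\<Delta>,h)\<close>: the rest of the removal
  sequence and all truncated segments start strictly after \<open>a\<close>. So along any enumeration of
  \<open>n[a]\<close> the \<open>a\<close>-parts evolve by "delete the shortest segment \<open>[a,c]\<close> with \<open>c \<ge> b\<close>", and two
  such deletions commute. Hence the final \<open>a\<close>-part \<open>C\<close> does not depend on the enumeration,
  and the removed segments \<open>\<Upsilon>(\<Delta>\<^sub>i, r\<^sub>i\<^sub>-\<^sub>1)\<close> make up exactly \<open>h[a] - C\<close>.\<close>

declare rem_seq.simps[simp del]

definition fit_ends :: "seg \<Rightarrow> seg multiset \<Rightarrow> int set" where
  "fit_ends d C = {c. (fst d, c) \<in># C \<and> snd d \<le> c}"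

lemma finite_fit_ends: "finite (fit_ends d C)"
  by (rule finite_subset[of _ "snd ` set_mset C"]) (force simp: fit_ends_def)+

lemma upsilon_eq_Min_fit_ends: "upsilon d C = (fst d, Min (fit_ends d C))"
  by (simp add: upsilon_def fit_ends_def)

lemma fst_upsilon [simp]: "fst (upsilon d C) = fst d"
  by (simp add: upsilon_def)

lemma seg_admissible_iff_fit_ends: "seg_admissible d C \<longleftrightarrow> fit_ends d C \<noteq> {}"
  by (auto simp: seg_admissible_def fit_ends_def)

lemma snd_upsilon_in_fit_ends:
  "seg_admissible d C \<Longrightarrow> snd (upsilon d C) \<in> fit_ends d C"
  using Min_in[OF finite_fit_ends]
  by (simp add: upsilon_eq_Min_fit_ends seg_admissible_iff_fit_ends)

lemma snd_upsilon_le: "c \<in> fit_ends d C \<Longrightarrow> snd (upsilon d C) \<le> c"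
  using finite_fit_ends by (simp add: upsilon_eq_Min_fit_ends)

lemma upsilon_in_mset: "seg_admissible d C \<Longrightarrow> upsilon d C \<in># C"
  using snd_upsilon_in_fit_ends[of d C] by (simp add: upsilon_def fit_ends_def)

lemma upsilon_eqI:
  assumes "c \<in> fit_ends d C" and "\<And>c'. c' \<in> fit_ends d C \<Longrightarrow> c \<le> c'"
  shows "upsilon d C = (fst d, c)"
  using Min_eqI[OF finite_fit_ends assms(2,1)] by (simp add: upsilon_eq_Min_fit_ends)

lemma upsilon_diff_other:
  assumes "seg_admissible d C" and "x \<noteq> upsilon d C"
  shows "seg_admissible d (C - {#x#})" and "upsilon d (C - {#x#}) = upsilon d C"
proof -
  have "snd (upsilon d C) \<in> fit_ends d (C - {#x#})"
    using snd_upsilon_in_fit_ends[OF assms(1)] assms(2)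
    by (auto simp: fit_ends_def in_diff_count upsilon_def)
  moreover have "fit_ends d (C - {#x#}) \<subseteq> fit_ends d C"
    by (auto simp: fit_ends_def dest: in_diffD)
  ultimately show "seg_admissible d (C - {#x#})" and "upsilon d (C - {#x#}) = upsilon d C"
    using upsilon_eqI[of _ d "C - {#x#}"] snd_upsilon_le[of _ d C]
    by (auto simp: seg_admissible_iff_fit_ends prod_eq_iff)
qed

text \<open>The effect of \<open>rmv d\<close> on the segments of \<open>h\<close> starting at \<open>fst d\<close> (see \<open>mpart_rmv\<close>).\<close>

definition rmv_head :: "seg \<Rightarrow> seg multiset option \<Rightarrow> seg multiset option" where
  "rmv_head d X = (case X of None \<Rightarrow> None | Some C \<Rightarrow>
     (if seg_admissible d C then Some (C - {#upsilon d C#}) else None))"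

lemma rmv_head_None [simp]: "rmv_head d None = None"
  by (simp add: rmv_head_def)

lemma rmv_head_Some:
  "rmv_head d (Some C) = (if seg_admissible d C then Some (C - {#upsilon d C#}) else None)"
  by (simp add: rmv_head_def)

lemma rmv_head_cong_fit_ends:
  assumes "fst d = fst d'" and "fit_ends d C = fit_ends d' C"
  shows "rmv_head d (Some C) = rmv_head d' (Some C)"
  using assms by (simp add: rmv_head_Some seg_admissible_iff_fit_ends upsilon_eq_Min_fit_ends)

lemma rmv_head_diff_unfit:
  assumes "fst x \<noteq> fst d \<or> snd x < snd d"
  shows "rmv_head d (Some (C - {#x#})) = map_option (\<lambda>D. D - {#x#}) (rmv_head d (Some C))"
proof -
  have "fit_ends d (C - {#x#}) = fit_ends d C"
    using assms by (auto simp: fit_ends_def in_diff_count)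
  then show ?thesis
    by (simp add: rmv_head_Some seg_admissible_iff_fit_ends upsilon_eq_Min_fit_ends
        add_mset_commute)
qed

lemma upsilon_larger_end:
  assumes fst: "fst d1 = fst d2" and le: "snd d1 \<le> snd d2"
    and adm: "seg_admissible d1 C" and between: "snd d2 \<le> snd (upsilon d1 C)"
  shows "seg_admissible d2 C" and "upsilon d2 C = upsilon d1 C"
    and "fit_ends d1 (C - {#upsilon d1 C#}) = fit_ends d2 (C - {#upsilon d1 C#})"
proof -
  define u1 where "u1 = upsilon d1 C"
  have min1: "\<And>c. c \<in> fit_ends d1 C \<Longrightarrow> snd u1 \<le> c"
    using snd_upsilon_le by (simp add: u1_def)
  have u1_fit: "snd u1 \<in> fit_ends d2 C"
    using snd_upsilon_in_fit_ends[OF adm] between fst by (auto simp: fit_ends_def u1_def)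
  then show "seg_admissible d2 C"
    by (auto simp: seg_admissible_iff_fit_ends)
  have "\<And>c. c \<in> fit_ends d2 C \<Longrightarrow> snd u1 \<le> c"
    using min1 le fst by (auto simp: fit_ends_def)
  then have "upsilon d2 C = (fst d2, snd u1)"
    by (rule upsilon_eqI[OF u1_fit])
  then show "upsilon d2 C = upsilon d1 C"
    using fst by (simp add: u1_def prod_eq_iff)
  have "\<And>c. c \<in> fit_ends d1 (C - {#u1#}) \<Longrightarrow> snd d2 \<le> c"
    using min1 between by (force simp: fit_ends_def u1_def dest: in_diffD)
  then show "fit_ends d1 (C - {#upsilon d1 C#}) = fit_ends d2 (C - {#upsilon d1 C#})"
    using le fst by (auto simp: fit_ends_def u1_def)
qed

lemma rmv_head_commute_le:
  assumes fst: "fst d1 = fst d2" and le: "snd d1 \<le> snd d2"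
  shows "rmv_head d1 (rmv_head d2 (Some C)) = rmv_head d2 (rmv_head d1 (Some C))"
proof (cases "seg_admissible d1 C")
  case False
  moreover have "fit_ends d2 C \<subseteq> fit_ends d1 C"
    using assms by (auto simp: fit_ends_def)
  ultimately show ?thesis by (auto simp: rmv_head_Some seg_admissible_iff_fit_ends)
next
  case adm1: True
  define u1 where "u1 = upsilon d1 C"
  have rhs: "rmv_head d1 (Some C) = Some (C - {#u1#})"
    using adm1 by (simp add: rmv_head_Some u1_def)
  show ?thesis
  proof (cases "snd d2 \<le> snd u1")
    case True
    note larger = upsilon_larger_end[OF fst le adm1 True[unfolded u1_def]]
    have "rmv_head d1 (rmv_head d2 (Some C)) = rmv_head d1 (Some (C - {#u1#}))"
      using larger(1,2) by (simp add: rmv_head_Some u1_def)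
    also have "\<dots> = rmv_head d2 (Some (C - {#u1#}))"
      using rmv_head_cong_fit_ends[OF fst larger(3)] by (simp add: u1_def)
    finally show ?thesis
      by (simp only: rhs)
  next
    case False
    then have "rmv_head d2 (Some (C - {#u1#})) = map_option (\<lambda>D. D - {#u1#}) (rmv_head d2 (Some C))"
      by (intro rmv_head_diff_unfit) simp
    moreover have "rmv_head d1 (Some (C - {#upsilon d2 C#})) = Some (C - {#upsilon d2 C#} - {#u1#})"
      if "seg_admissible d2 C"
    proof -
      have "snd d2 \<le> snd (upsilon d2 C)"
        using snd_upsilon_in_fit_ends[OF that] by (simp add: fit_ends_def)
      then have "upsilon d2 C \<noteq> u1" using False by auto
      then show ?thesis
        using upsilon_diff_other[OF adm1] by (simp add: rmv_head_Some u1_def)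
    qed
    ultimately show ?thesis
      using rhs by (auto simp: rmv_head_Some diff_right_commute)
  qed
qed

lemma rmv_head_commute:
  assumes "fst d1 = fst d2"
  shows "rmv_head d1 (rmv_head d2 X) = rmv_head d2 (rmv_head d1 X)"
proof (cases X)
  case (Some C)
  then show ?thesis
    using rmv_head_commute_le[of d1 d2 C] rmv_head_commute_le[of d2 d1 C] assms
    by (cases "snd d1 \<le> snd d2") auto
qed simp

lemma fold_rmv_head_perm:
  assumes "\<forall>x\<in>set xs. fst x = a" and "mset xs = mset ys"
  shows "fold rmv_head xs = fold rmv_head ys"
proof (rule fold_multiset_equiv)
  fix x y assume "x \<in> set xs" "y \<in> set xs"
  then show "rmv_head x \<circ> rmv_head y = rmv_head y \<circ> rmv_head x"
    using assms(1) rmv_head_commute by (auto simp: fun_eq_iff)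
qed (use assms(2) in auto)

lemma next_seg_in_cands: "next_seg h b s = Some t \<Longrightarrow> t \<in> cands h b s"
  using lmin_in[of "cands h b s"] by (auto simp: next_seg_def cands_def split: if_splits)

lemma rem_seq_fst_ge: "t \<in> set (rem_seq h b s) \<Longrightarrow> fst s \<le> fst t"
proof (induction h b s rule: rem_seq.induct)
  case (1 h b s)
  then show ?case
    using next_seg_in_cands[of h b s] rem_seq.simps[of h b s]
    by (cases "next_seg h b s") (fastforce simp: cands_def)+
qed

lemma rem_seq_Cons:
  obtains rest where "rem_seq h b s = s # rest" and "\<forall>t\<in>set rest. fst s < fst t"
proof (cases "next_seg h b s")
  case None
  then have "rem_seq h b s = s # []"
    by (subst rem_seq.simps) simp
  then show thesis using that by simp
next
  case (Some t')
  have seq: "rem_seq h b s = s # rem_seq h b t'"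
    using Some by (subst rem_seq.simps) simp
  have "fst s < fst t'"
    using next_seg_in_cands[OF Some] by (simp add: cands_def)
  then have "\<forall>t\<in>set (rem_seq h b t'). fst s < fst t"
    using rem_seq_fst_ge[of _ h b t'] by fastforce
  with seq show thesis using that by blast
qed

lemma truncs_fst: "x \<in># truncs b L \<Longrightarrow> fst x = b + 1 \<or> fst x \<in> fst ` set (tl L)"
  by (induction b L rule: truncs.induct) (auto split: if_splits)

lemma fit_ends_mpart: "fit_ends d (mpart h (fst d)) = fit_ends d h"
  by (auto simp: fit_ends_def mpart_def)

lemma upsilon_mpart: "upsilon d (mpart h (fst d)) = upsilon d h"
  by (simp add: upsilon_eq_Min_fit_ends fit_ends_mpart)

lemma mpart_rmv:
  assumes "fst d \<le> snd d"
  shows "map_option (\<lambda>h. mpart h (fst d)) (rmv d oh)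
       = rmv_head d (map_option (\<lambda>h. mpart h (fst d)) oh)"
proof (cases oh)
  case None
  then show ?thesis by (simp add: rmv_def)
next
  case (Some h)
  have adm_iff: "seg_admissible d (mpart h (fst d)) \<longleftrightarrow> seg_admissible d h"
    by (simp add: seg_admissible_iff_fit_ends fit_ends_mpart)
  define u where "u = upsilon d h"
  obtain rest where seq: "rem_seq h (snd d) u = u # rest" and later: "\<forall>t\<in>set rest. fst d < fst t"
    using rem_seq_Cons[of h "snd d" u] by (auto simp: u_def)
  have "mpart (mset rest) (fst d) = {#}"
    using later by (auto simp: mpart_def filter_mset_eq_conv)
  then have "mpart (mset (u # rest)) (fst d) = {#u#}"
    by (simp add: mpart_def u_def)
  moreover have "\<forall>x\<in>#truncs (snd d) (u # rest). fst x \<noteq> fst d"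
    using truncs_fst[of _ "snd d" "u # rest"] later assms by fastforce
  then have "mpart (truncs (snd d) (u # rest)) (fst d) = {#}"
    by (auto simp: mpart_def filter_mset_eq_conv)
  ultimately have "mpart (h - mset (u # rest) + truncs (snd d) (u # rest)) (fst d)
      = mpart h (fst d) - {#u#}"
    by (simp add: mpart_def)
  then show ?thesis
    using Some seq adm_iff by (simp add: rmv_def rmv_head_Some upsilon_mpart u_def Let_def)
qed

lemma mpart_rmult:
  assumes "\<forall>x\<in>set L. fst x = a \<and> a \<le> snd x"
  shows "map_option (\<lambda>h. mpart h a) (rmult (mset L) h) = fold rmv_head L (Some (mpart h a))"
proof -
  define S where "S = sorted_list_of_multiset (mset L)"
  have mset_S: "mset S = mset L" by (simp add: S_def)
  then have set_S: "set S = set L" by (metis set_mset_mset)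
  have "map_option (\<lambda>h. mpart h a) (fold rmv S oh) = fold rmv_head S (map_option (\<lambda>h. mpart h a) oh)"
    for oh using assms unfolding set_S[symmetric]
  proof (induction S arbitrary: oh)
    case (Cons x S)
    then show ?case using mpart_rmv[of x oh] by simp
  qed simp
  then have "map_option (\<lambda>h. mpart h a) (rmult (mset L) h) = fold rmv_head S (Some (mpart h a))"
    by (simp add: rmult_def S_def)
  also have "\<dots> = fold rmv_head L (Some (mpart h a))"
    using fold_rmv_head_perm[of S a L] assms mset_S set_S by simp
  finally show ?thesis .
qed

lemma fs_list_snoc: "fs_list (xs @ [x]) h = fs_list xs h + {#upsilon x (the (rmult (mset xs) h))#}"
proof -
  let ?F = "\<lambda>ys i. upsilon (ys ! i) (the (rmult (mset (take i ys)) h))"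
  have "fs_list (xs @ [x]) h
      = mset (map (?F (xs @ [x])) [0..<length xs]) + {#?F (xs @ [x]) (length xs)#}"
    by (simp add: fs_list_def del: mset_map)
  also have "map (?F (xs @ [x])) [0..<length xs] = map (?F xs) [0..<length xs]"
    by (simp add: nth_append)
  finally show ?thesis
    by (simp add: fs_list_def)
qed

lemma fs_list_add_fold_rmv_head:
  assumes "\<forall>x\<in>set xs. fst x = a \<and> a \<le> snd x"
    and "fold rmv_head xs (Some (mpart h a)) = Some C"
  shows "fs_list xs h + C = mpart h a"
  using assms
proof (induction xs arbitrary: C rule: rev_induct)
  case Nil
  then show ?case by (simp add: fs_list_def)
next
  case (snoc x xs)
  then have x: "fst x = a" and xs: "\<forall>x\<in>set xs. fst x = a \<and> a \<le> snd x" by auto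
  obtain C0 where C0: "fold rmv_head xs (Some (mpart h a)) = Some C0"
    using snoc.prems(2) by (cases "fold rmv_head xs (Some (mpart h a))") auto
  then have adm: "seg_admissible x C0" and C: "C = C0 - {#upsilon x C0#}"
    using snoc.prems(2) by (auto simp: rmv_head_Some split: if_splits)
  obtain r where r: "rmult (mset xs) h = Some r" and C0_eq: "C0 = mpart r a"
    using mpart_rmult[OF xs, of h] C0 by auto
  have "upsilon x (the (rmult (mset xs) h)) = upsilon x C0"
    using r C0_eq upsilon_mpart[of x r] x by simp
  then have "fs_list (xs @ [x]) h + C = fs_list xs h + C0"
    using upsilon_in_mset[OF adm] by (simp add: fs_list_snoc C)
  also have "\<dots> = mpart h a"
    using snoc.IH[OF xs C0] .
  finally show ?case .
qed

lemma in_mpart_is_mult: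
  assumes "is_mult n" and "x \<in># mpart n a"
  shows "fst x = a \<and> a \<le> snd x"
  using assms by (auto simp: is_mult_def mpart_def)

theorem mainTheorem3:
  fixes h n :: "seg multiset" and xs ys :: "seg list"
  assumes "is_mult h" and "is_mult n" and "n \<noteq> {#}"
    and "admissible (mpart n (Min (fst ` set_mset n))) h"
    and "mset xs = mpart n (Min (fst ` set_mset n))"
    and "mset ys = mpart n (Min (fst ` set_mset n))"
  shows "fs_list xs h = fs_list ys h"
proof -
  define a where "a = Min (fst ` set_mset n)"
  have xs: "\<forall>x\<in>set xs. fst x = a \<and> a \<le> snd x" and ys: "\<forall>x\<in>set ys. fst x = a \<and> a \<le> snd x"
    using in_mpart_is_mult[OF assms(2)] assms(5,6) unfolding a_def by (metis set_mset_mset)+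
  have "fold rmv_head xs (Some (mpart h a)) \<noteq> None"
    using assms(4,5) mpart_rmult[OF xs, of h] by (auto simp: admissible_def a_def dest: sym)
  then obtain C where C: "fold rmv_head xs (Some (mpart h a)) = Some C"
    by blast
  moreover have "fold rmv_head ys = fold rmv_head xs"
    using fold_rmv_head_perm[of ys a xs] ys assms(5,6) by simp
  ultimately have "fs_list xs h + C = fs_list ys h + C"
    using fs_list_add_fold_rmv_head[OF xs] fs_list_add_fold_rmv_head[OF ys] by simp
  then show ?thesis by simp
qed

end
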